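(* Let $\gamma$ be the Euler–Mascheroni constant and $\lambda(s)=\sum_{n\ge0}(2n+1)^{-s}$ (for real $s>1$). Then $$-\lim_{x\to\infty}\left\{\Gamma(\lambda(x)-1)-3^x+\Bigl(\frac95\Bigr)^x+\Bigl(\frac97\Bigr)^x-\Bigl(\frac{27}{25}\Bigr)^x+1\right\}=\gamma .$$
   Context: $\Gamma$ is Euler's Gamma function. *)

theory Defs
  imports "HOL-Analysis.Analysis"
begin

definition dirichlet_lambda :: "real \<Rightarrow> real" where
  "dirichlet_lambda s = (\<Sum>n. (2 * real n + 1) powr (- s))"

end

theory Submission
  imports Defs "HOL-Real_Asymp.Real_Asymp"
begin

text \<open>
  The quantity \<open>\<epsilon>(x) = \<lambda>(x) - 1 = 3^-x + 5^-x + 7^-x + 9^-x + O(11^-x)\<close> tends to \<open>0\<close> from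
  above. Since \<open>\<Gamma>(1 + \<epsilon>) = \<epsilon> \<Gamma>(\<epsilon>)\<close> and \<open>\<Gamma>'(1) = -\<gamma>\<close>, we have \<open>\<Gamma>(\<epsilon>) = 1/\<epsilon> - \<gamma> + o(1)\<close>.
  With \<open>A = 3^x\<close> and \<open>s = \<epsilon> - 1/A\<close>, the second-order expansion of \<open>1/\<epsilon> = A/(1 + A s)\<close> is
  \<open>A - A^2 s + A^3 s^2 + O(A^4 s^3)\<close>. Its terms that do not vanish are
  \<open>3^x - (9/5)^x - (9/7)^x - 1 + (27/25)^x\<close>, the \<open>1\<close> being \<open>3^(2x) 9^-x\<close>; all remaining terms are
  bounded by multiples of \<open>q^x\<close> with \<open>q < 1\<close>.
\<close>

lemma summable_odd_powr:
  assumes "x > 1"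
  shows "summable (\<lambda>n::nat. (2 * real n + 1) powr -x)"
proof (rule summable_comparison_test')
  have "summable (\<lambda>n::nat. real n powr -x)"
    using assms by (simp add: summable_real_powr_iff)
  then show "summable (\<lambda>n. real (Suc n) powr -x)"
    by (subst summable_Suc_iff)
  fix n :: nat
  have "(2 * real n + 1) powr -x \<le> real (Suc n) powr -x"
    using assms by (intro powr_mono2') auto
  then show "norm ((2 * real n + 1) powr -x) \<le> real (Suc n) powr -x"
    by simp
qed

definition lambda_tail :: "real \<Rightarrow> real" where
  "lambda_tail x = (\<Sum>n. (2 * real (n + 5) + 1) powr -x)"

lemma summable_lambda_tail_terms:
  assumes "x > 1"
  shows "summable (\<lambda>n::nat. (2 * real (n + 5) + 1) powr -x)"
  using summable_odd_powr[OF assms] by (subst summable_iff_shift)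

lemma dirichlet_lambda_eq_lambda_tail:
  assumes "x > 1"
  shows "dirichlet_lambda x = 1 + 3 powr -x + 5 powr -x + 7 powr -x + 9 powr -x + lambda_tail x"
proof -
  have "dirichlet_lambda x = lambda_tail x + (\<Sum>n<5. (2 * real n + 1) powr -x)"
    unfolding dirichlet_lambda_def lambda_tail_def
    by (rule suminf_split_initial_segment[OF summable_odd_powr[OF assms]])
  also have "(\<Sum>n<5. (2 * real n + 1) powr -x) = 1 + 3 powr -x + 5 powr -x + 7 powr -x + 9 powr -x"
    by (simp add: numeral_eq_Suc lessThan_Suc)
  finally show ?thesis
    by simp
qed

lemma lambda_tail_nonneg:
  assumes "x > 1"
  shows "0 \<le> lambda_tail x"
  unfolding lambda_tail_def by (rule suminf_nonneg[OF summable_lambda_tail_terms[OF assms]]) simp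

lemma lambda_tail_le:
  assumes "1 < y" "y \<le> x"
  shows "lambda_tail x \<le> 11 powr (y - x) * lambda_tail y"
proof -
  have "lambda_tail x \<le> (\<Sum>n. (2 * real (n + 5) + 1) powr -y * 11 powr (y - x))"
    unfolding lambda_tail_def
  proof (rule suminf_le)
    fix n :: nat
    define m where "m = 2 * real (n + 5) + 1"
    have "m \<ge> 11"
      by (simp add: m_def)
    have "m powr -x = m powr -y * m powr (y - x)"
      by (simp flip: powr_add)
    also have "\<dots> \<le> m powr -y * 11 powr (y - x)"
      using \<open>m \<ge> 11\<close> assms by (intro mult_left_mono powr_mono2') auto
    finally show "m powr -x \<le> m powr -y * 11 powr (y - x)" .
  qed (use summable_lambda_tail_terms assms in \<open>auto intro: summable_mult2\<close>)
  also have "\<dots> = 11 powr (y - x) * lambda_tail y"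
    using suminf_mult2[OF summable_lambda_tail_terms[OF assms(1)], of "11 powr (y - x)"]
    unfolding lambda_tail_def by (simp add: mult.commute)
  finally show ?thesis .
qed

text \<open>Any base strictly between 9 and 11 would do: below 11 to dominate the tail, above 9 so that
  \<open>3^(2x)\<close> times the bound still vanishes.\<close>

lemma eventually_lambda_tail_le: "eventually (\<lambda>x. lambda_tail x \<le> 10 powr -x) at_top"
proof -
  have "((\<lambda>x::real. 121 * lambda_tail 2 * (10/11) powr x) \<longlongrightarrow> 0) at_top"
    by real_asymp
  then have "eventually (\<lambda>x::real. 121 * lambda_tail 2 * (10/11) powr x < 1) at_top"
    by (rule order_tendstoD) simp
  then show ?thesis
    using eventually_ge_at_top[of "2::real"]
  proof eventually_elim
    case (elim x)
    have "lambda_tail x \<le> 11 powr (2 - x) * lambda_tail 2"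
      using elim by (intro lambda_tail_le) auto
    also have "\<dots> = (121 * lambda_tail 2 * (10/11) powr x) * 10 powr -x"
      by (simp add: powr_diff powr_minus_divide powr_divide)
    also have "\<dots> \<le> 10 powr -x"
      using elim lambda_tail_nonneg[of 2] by (intro mult_left_le_one_le) auto
    finally show ?case .
  qed
qed

lemma dirichlet_lambda_minus_1_tendsto: "filterlim (\<lambda>x. dirichlet_lambda x - 1) (at_right 0) at_top"
proof (rule tendsto_imp_filterlim_at_right)
  have bounds: "eventually (\<lambda>x. 3 powr -x \<le> dirichlet_lambda x - 1 \<and>
      dirichlet_lambda x - 1 \<le> 3 powr -x + 5 powr -x + 7 powr -x + 9 powr -x + 10 powr -x) at_top"
    using eventually_lambda_tail_le eventually_gt_at_top[of "1::real"]
    by eventually_elim (auto simp: dirichlet_lambda_eq_lambda_tail dest: lambda_tail_nonneg)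
  show "((\<lambda>x. dirichlet_lambda x - 1) \<longlongrightarrow> 0) at_top"
  proof (rule tendsto_sandwich)
    show "((\<lambda>x::real. 3 powr -x) \<longlongrightarrow> 0) at_top"
      by real_asymp
    show "((\<lambda>x::real. 3 powr -x + 5 powr -x + 7 powr -x + 9 powr -x + 10 powr -x) \<longlongrightarrow> 0) at_top"
      by real_asymp
  qed (use bounds in \<open>auto elim: eventually_mono\<close>)
  show "eventually (\<lambda>x. dirichlet_lambda x - 1 > 0) at_top"
    using bounds
  proof eventually_elim
    case (elim x)
    have "0 < (3::real) powr -x"
      by simp
    with elim show ?case
      by linarith
  qed
qed

lemma inverse_add_second_order_le:
  fixes A s :: real
  assumes "A > 0" "s \<ge> 0"
  shows "\<bar>1 / (1/A + s) - A + A^2 * s - A^3 * s^2\<bar> \<le> A^4 * s^3"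
proof -
  define u where "u = A * s"
  have "u \<ge> 0" "A * u^3 \<ge> 0"
    using assms by (simp_all add: u_def)
  have "1 / (1/A + s) = A / (1 + u)"
    using assms by (simp add: u_def field_simps)
  also have "\<dots> = A - A * u + A * u^2 - A * u^3 / (1 + u)"
    using \<open>u \<ge> 0\<close> by (simp add: field_simps power2_eq_square power3_eq_cube)
  finally have "1 / (1/A + s) - A + A^2 * s - A^3 * s^2 = - (A * u^3 / (1 + u))"
    by (simp add: u_def power2_eq_square power3_eq_cube algebra_simps)
  moreover have "A * u^3 / (1 + u) \<le> A * u^3"
    using \<open>u \<ge> 0\<close> \<open>A * u^3 \<ge> 0\<close> by (simp add: divide_le_eq mult_le_cancel_left1)
  moreover have "A * u^3 = A^4 * s^3"
    by (simp add: u_def power_mult_distrib power4_eq_xxxx power3_eq_cube)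
  ultimately show ?thesis
    using \<open>u \<ge> 0\<close> \<open>A * u^3 \<ge> 0\<close> by simp
qed

lemma inverse_perturbed_expansion_le:
  fixes A b c r t :: real
  assumes "A > 0" "0 \<le> c" "c \<le> 2 * b" "0 \<le> r" "r \<le> t" "t \<le> b"
  shows "\<bar>1 / (1/A + b + c + r) - A + A^2 * (b + c) - A^3 * b^2\<bar>
           \<le> A^2 * t + 5 * A^3 * b * (c + t) + 64 * A^4 * b^3"
proof -
  define s where "s = b + c + r"
  have "0 \<le> b" "b \<le> s" "s \<le> 4 * b"
    using assms by (auto simp: s_def)
  have split: "1 / (1/A + b + c + r) - A + A^2 * (b + c) - A^3 * b^2
      = (1 / (1/A + s) - A + A^2 * s - A^3 * s^2) - A^2 * r + A^3 * (s - b) * (s + b)"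
    by (simp add: s_def add.assoc algebra_simps power2_eq_square power3_eq_cube)
  have "\<bar>1 / (1/A + s) - A + A^2 * s - A^3 * s^2\<bar> \<le> A^4 * s^3"
    using assms \<open>b \<le> s\<close> \<open>0 \<le> b\<close> by (intro inverse_add_second_order_le) auto
  also have "\<dots> \<le> A^4 * (4 * b)^3"
    using assms \<open>b \<le> s\<close> \<open>0 \<le> b\<close> \<open>s \<le> 4 * b\<close> by (intro mult_left_mono power_mono) auto
  finally have quadratic: "\<bar>1 / (1/A + s) - A + A^2 * s - A^3 * s^2\<bar> \<le> 64 * A^4 * b^3"
    by (simp add: power_mult_distrib)
  have "A^2 * r \<le> A^2 * t" "0 \<le> A^2 * r"
    using assms by (simp_all add: mult_left_mono)
  moreover have "A^3 * (s - b) * (s + b) \<le> A^3 * (c + t) * (5 * b)"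
    using assms \<open>0 \<le> b\<close> \<open>b \<le> s\<close> \<open>s \<le> 4 * b\<close>
    by (intro mult_mono mult_left_mono) (auto simp: s_def)
  moreover have "0 \<le> A^3 * (s - b) * (s + b)"
    using assms \<open>0 \<le> b\<close> \<open>b \<le> s\<close> by simp
  ultimately show ?thesis
    unfolding split using quadratic by (simp add: abs_le_iff algebra_simps)
qed

lemma inverse_dirichlet_lambda_minus_1_expansion:
  "((\<lambda>x. 1 / (dirichlet_lambda x - 1) - 3 powr x + (9/5) powr x + (9/7) powr x
      - (27/25) powr x + 1) \<longlongrightarrow> 0) at_top"
proof (rule Lim_null_comparison)
  show "eventually (\<lambda>x. norm (1 / (dirichlet_lambda x - 1) - 3 powr x + (9/5) powr x
      + (9/7) powr x - (27/25) powr x + 1) \<le> (9/10) powr x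
      + 5 * ((27/35) powr x + (3/5) powr x + (27/50) powr x) + 64 * (81/125) powr x) at_top"
    using eventually_lambda_tail_le eventually_gt_at_top[of "1::real"]
  proof eventually_elim
    case (elim x)
    define A b c t :: real
      where "A = 3 powr x" and "b = 5 powr -x" and "c = 7 powr -x + 9 powr -x" and "t = 10 powr -x"
    have "7 powr -x \<le> b" "9 powr -x \<le> b" "t \<le> b"
      using elim by (auto simp: b_def t_def intro!: powr_mono2')
    then have "c \<le> 2 * b"
      by (simp add: c_def)
    have "dirichlet_lambda x - 1 = 1/A + b + c + lambda_tail x"
      using elim by (simp add: dirichlet_lambda_eq_lambda_tail A_def b_def c_def powr_minus_divide)
    moreover have "A^2 * (b + c) - A^3 * b^2 = (9/5) powr x + (9/7) powr x + 1 - (27/25) powr x"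
      by (simp add: A_def b_def c_def algebra_simps power2_eq_square power3_eq_cube
          powr_minus_divide flip: powr_mult powr_divide)
    moreover have "A^2 * t + 5 * A^3 * b * (c + t) + 64 * A^4 * b^3 = (9/10) powr x
        + 5 * ((27/35) powr x + (3/5) powr x + (27/50) powr x) + 64 * (81/125) powr x"
      by (simp add: A_def b_def c_def t_def algebra_simps power2_eq_square power3_eq_cube
          power4_eq_xxxx powr_minus_divide flip: powr_mult powr_divide)
    moreover have "\<bar>1 / (1/A + b + c + lambda_tail x) - A + A^2 * (b + c) - A^3 * b^2\<bar>
        \<le> A^2 * t + 5 * A^3 * b * (c + t) + 64 * A^4 * b^3"
      using elim \<open>c \<le> 2 * b\<close> \<open>t \<le> b\<close> lambda_tail_nonneg[of x]
      by (intro inverse_perturbed_expansion_le) (auto simp: A_def c_def t_def)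
    ultimately show ?case
      by (simp add: A_def algebra_simps)
  qed
  show "((\<lambda>x::real. (9/10) powr x + 5 * ((27/35) powr x + (3/5) powr x + (27/50) powr x)
      + 64 * (81/125) powr x) \<longlongrightarrow> 0) at_top"
    by (intro tendsto_add_zero tendsto_mult_right_zero; real_asymp)
qed

lemma Gamma_minus_inverse_tendsto: "((\<lambda>e::real. Gamma e - 1/e) \<longlongrightarrow> - euler_mascheroni) (at_right 0)"
proof -
  have "(Gamma has_field_derivative - euler_mascheroni) (at (1::real))"
    using has_field_derivative_Gamma[of "1::real"] by simp
  then have "((\<lambda>h. (Gamma (1 + h) - Gamma 1) / h) \<longlongrightarrow> - euler_mascheroni) (at_right (0::real))"
    by (auto simp: DERIV_def intro: tendsto_mono[OF at_within_le_at])
  moreover have "eventually (\<lambda>h::real. (Gamma (1 + h) - Gamma 1) / h = Gamma h - 1/h) (at_right 0)"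
    using eventually_at_right_less[of 0]
  proof eventually_elim
    case (elim h)
    then have "Gamma (h + 1) = h * Gamma h"
      by (intro Gamma_plus1) (auto elim!: nonpos_Ints_cases)
    with elim show ?case
      by (simp add: field_simps add.commute)
  qed
  ultimately show ?thesis
    by (rule Lim_transform_eventually)
qed

theorem mainTheorem12:
  shows "((\<lambda>x::real. Gamma (dirichlet_lambda x - 1) - 3 powr x + (9/5) powr x
            + (9/7) powr x - (27/25) powr x + 1) \<longlongrightarrow> - euler_mascheroni) at_top"
proof -
  have "((\<lambda>x. Gamma (dirichlet_lambda x - 1) - 1 / (dirichlet_lambda x - 1)) \<longlongrightarrow> - euler_mascheroni) at_top"
    by (rule filterlim_compose[OF Gamma_minus_inverse_tendsto dirichlet_lambda_minus_1_tendsto])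
  from tendsto_add[OF this inverse_dirichlet_lambda_minus_1_expansion]
  show ?thesis
    by (simp add: algebra_simps)
qed

end
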